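(* Let $\{(a_i,b_i,m_i,n_i)\in(0,\infty)^2\times\mathbb{R}^2 : i\in\mathbb{Z}\}$ be a positive ABMN solution. Then: (1) the solution is strict, i.e. $m_{i+1}>m_i$ and $n_i>n_{i+1}$ for all $i\in\mathbb{Z}$; (2) the limits $m_{-\infty}=\lim_{k\to\infty}m_{-k}$, $m_\infty=\lim_{k\to\infty}m_k$, $n_{-\infty}=\lim_{k\to\infty}n_{-k}$, $n_\infty=\lim_{k\to\infty}n_k$ exist in $\mathbb{R}\cup\{\pm\infty\}$ and satisfy $m_\infty>m_{-\infty}$ and $n_{-\infty}>n_\infty$; (3) these four limits are real numbers; in particular the Mina margin $\frac{n_{-\infty}-n_\infty}{m_\infty-m_{-\infty}}$ is a positive finite real number.
   Context: The ABMN system on $\mathbb{Z}$ is the following set of equations in real variables $a_i,b_i,m_i,n_i$ ($i\in\mathbb{Z}$), with $a_i,b_i\ge 0$ always assumed: for every $i\in\mathbb{Z}$, $(a_i+b_i)(m_i+a_i)=a_im_{i+1}+b_im_{i-1}$; $(a_i+b_i)(n_i+b_i)=a_in_{i+1}+b_in_{i-1}$; $(a_i+b_i)^2=b_i(m_{i+1}-m_{i-1})$; $(a_i+b_i)^2=a_i(n_{i-1}-n_{i+1})$. A solution is positive if $a_i>0$ and $b_i>0$ for all $i$; it is strict if $m_{i+1}>m_i$ and $n_i>n_{i+1}$ for all $i$. Its boundary data is $(m_{-\infty},m_\infty,n_{-\infty},n_\infty)$, the limits $\lim_{k\to\infty}m_{-k}$, $\lim_{k\to\infty}m_k$, $\lim_{k\to\infty}n_{-k}$,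 $\lim_{k\to\infty}n_k$ (when they exist), and its Mina margin is $\frac{n_{-\infty}-n_\infty}{m_\infty-m_{-\infty}}$. *)

theory Defs
  imports "HOL-Analysis.Analysis"
begin

definition ABMN :: "(int \<Rightarrow> real) \<Rightarrow> (int \<Rightarrow> real) \<Rightarrow> (int \<Rightarrow> real) \<Rightarrow> (int \<Rightarrow> real) \<Rightarrow> bool" where
  "ABMN a b m n \<longleftrightarrow> (\<forall>i::int.
      a i \<ge> 0 \<and> b i \<ge> 0 \<and>
      (a i + b i) * (m i + a i) = a i * m (i + 1) + b i * m (i - 1) \<and>
      (a i + b i) * (n i + b i) = a i * n (i + 1) + b i * n (i - 1) \<and>
      (a i + b i)^2 = b i * (m (i + 1) - m (i - 1)) \<and>
      (a i + b i)^2 = a i * (n (i - 1) - n (i + 1)))"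

definition positive_ABMN :: "(int \<Rightarrow> real) \<Rightarrow> (int \<Rightarrow> real) \<Rightarrow> (int \<Rightarrow> real) \<Rightarrow> (int \<Rightarrow> real) \<Rightarrow> bool" where
  "positive_ABMN a b m n \<longleftrightarrow> ABMN a b m n \<and> (\<forall>i. a i > 0 \<and> b i > 0)"

definition strict_ABMN :: "(int \<Rightarrow> real) \<Rightarrow> (int \<Rightarrow> real) \<Rightarrow> bool" where
  "strict_ABMN m n \<longleftrightarrow> (\<forall>i::int. m (i + 1) > m i \<and> n i > n (i + 1))"

end

theory Submission imports Defs begin

text \<open>Eliminating the cross terms, the increments of a positive solution are
  \<open>m(i+1) - m(i) = 2a(i) + b(i)\<close> and \<open>m(i) - m(i-1) = a(i)\<^sup>2 / b(i)\<close>, and symmetrically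
  for \<open>n\<close>; strictness is immediate. Comparing the two expressions for \<open>m(i+1) - m(i)\<close>, the
  ratio \<open>t = a/b\<close> satisfies \<open>t(i+1) \<ge> t(i) + 2 t(i)\<^sup>2\<close>, so eventually \<open>b \<le> a\<close>. From then on
  \<open>m + 2a + 6b\<close> decreases and \<open>n - 2b\<close> increases, so \<open>m\<close> is bounded above and \<open>n\<close> below.
  The reflection \<open>i \<mapsto> -i\<close>, which swaps \<open>a, m\<close> with \<open>b, n\<close>, gives the other two bounds,
  and bounded monotone sequences converge.\<close>

lemma int_step_mono:
  fixes f :: "int \<Rightarrow> 'a::preorder"
  assumes "\<And>k. i \<le> k \<Longrightarrow> k < j \<Longrightarrow> f k \<le> f (k + 1)" and "i \<le> j"
  shows "f i \<le> f j"
  using \<open>i \<le> j\<close> assms(1)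
proof (induction j rule: int_ge_induct)
  case base
  then show ?case by simp
next
  case (step j)
  then have "f i \<le> f j" and "f j \<le> f (j + 1)" by simp_all
  then show ?case by (rule order_trans)
qed

lemma int_uniform_growth_eventually_ge:
  fixes f :: "int \<Rightarrow> real"
  assumes step: "\<And>i. 0 \<le> i \<Longrightarrow> f i + d \<le> f (i + 1)" and "0 < d"
  shows "\<forall>\<^sub>F i in at_top. c \<le> f i"
proof -
  have linear: "f 0 + real k * d \<le> f (int k)" for k
  proof (induction k)
    case (Suc k)
    then show ?case using step[of "int k"] by (simp add: algebra_simps)
  qed simp
  obtain k :: nat where "(c - f 0) / d < real k" using reals_Archimedean2 by blast
  then have "c \<le> f (int k)" using linear[of k] \<open>0 < d\<close> by (simp add: field_simps)
  moreover have "f (int k) \<le> f i" if "int k \<le> i" for i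
  proof -
    have "f j \<le> f (j + 1)" if "0 \<le> j" for j
      using step[OF that] \<open>0 < d\<close> by linarith
    then show ?thesis using int_step_mono[of "int k" i f] \<open>int k \<le> i\<close> by force
  qed
  ultimately show ?thesis
    unfolding eventually_at_top_linorder by (meson order_trans)
qed

lemma mono_tendsto_SUP_at_top:
  fixes f :: "'a::linorder \<Rightarrow> 'b::{conditionally_complete_linorder, linorder_topology}"
  assumes "mono f" and "bdd_above (range f)"
  shows "(f \<longlongrightarrow> (SUP i. f i)) at_top"
proof (rule increasing_tendsto)
  show "\<forall>\<^sub>F i in at_top. f i \<le> (SUP i. f i)"
    using cSUP_upper[OF UNIV_I assms(2)] by simp
next
  fix y assume "y < (SUP i. f i)"
  then obtain i where "y < f i" using less_cSUP_iff[OF _ assms(2)] by auto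
  show "\<forall>\<^sub>F j in at_top. y < f j"
    using eventually_ge_at_top[of i]
    by (rule eventually_mono) (meson \<open>y < f i\<close> assms(1) monoD less_le_trans)
qed

lemma mono_tendsto_INF_at_bot:
  fixes f :: "'a::linorder \<Rightarrow> 'b::{conditionally_complete_linorder, linorder_topology}"
  assumes "mono f" and "bdd_below (range f)"
  shows "(f \<longlongrightarrow> (INF i. f i)) at_bot"
proof (rule decreasing_tendsto)
  show "\<forall>\<^sub>F i in at_bot. (INF i. f i) \<le> f i"
    using cINF_lower[OF assms(2) UNIV_I] by simp
next
  fix y assume "(INF i. f i) < y"
  then obtain i where "f i < y" using cINF_less_iff[OF _ assms(2)] by auto
  show "\<forall>\<^sub>F j in at_bot. f j < y"
    using eventually_le_at_bot[of i]
    by (rule eventually_mono) (meson \<open>f i < y\<close> assms(1) monoD le_less_trans)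
qed

lemma int_strict_step_bounded_limits:
  fixes f :: "int \<Rightarrow> real"
  assumes step: "\<And>i. f i < f (i + 1)"
    and "bdd_above (range f)" and "bdd_below (range f)"
  shows "\<exists>l u. (f \<longlongrightarrow> l) at_bot \<and> (f \<longlongrightarrow> u) at_top \<and> l < u"
proof (intro exI conjI)
  have "mono f"
    by (rule monoI) (use int_step_mono[of _ _ f] step in \<open>auto intro: less_imp_le\<close>)
  then show "(f \<longlongrightarrow> (INF i. f i)) at_bot" "(f \<longlongrightarrow> (SUP i. f i)) at_top"
    using assms(2,3) by (simp_all add: mono_tendsto_INF_at_bot mono_tendsto_SUP_at_top)
  have "(INF i. f i) \<le> f 0" using cINF_lower[OF assms(3) UNIV_I] .
  also have "f 0 < f 1" using step[of 0] by simp
  also have "f 1 \<le> (SUP i. f i)" using cSUP_upper[OF UNIV_I assms(2)] .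
  finally show "(INF i. f i) < (SUP i. f i)" .
qed

lemma positive_ABMN_pos:
  assumes "positive_ABMN a b m n"
  shows "0 < a i" "0 < b i"
  using assms unfolding positive_ABMN_def by auto

lemma positive_ABMN_reflect:
  assumes P: "positive_ABMN a b m n"
  shows "positive_ABMN (\<lambda>i. b (-i)) (\<lambda>i. a (-i)) (\<lambda>i. n (-i)) (\<lambda>i. m (-i))"
  unfolding positive_ABMN_def ABMN_def
proof (intro conjI allI)
  fix i :: int
  have shift: "-(i + 1) = -i - 1" "-(i - 1) = -i + 1" by simp_all
  show "0 < b (-i)" "0 < a (-i)" "0 \<le> b (-i)" "0 \<le> a (-i)"
    using positive_ABMN_pos[OF P] by (auto intro: less_imp_le)
  have "(a j + b j) * (m j + a j) = a j * m (j + 1) + b j * m (j - 1) \<and>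
      (a j + b j) * (n j + b j) = a j * n (j + 1) + b j * n (j - 1) \<and>
      (a j + b j)^2 = b j * (m (j + 1) - m (j - 1)) \<and>
      (a j + b j)^2 = a j * (n (j - 1) - n (j + 1))" for j
    using P unfolding positive_ABMN_def ABMN_def by blast
  from this[of "-i"]
  show "(b (-i) + a (-i)) * (n (-i) + b (-i)) = b (-i) * n (-(i + 1)) + a (-i) * n (-(i - 1))"
    "(b (-i) + a (-i)) * (m (-i) + a (-i)) = b (-i) * m (-(i + 1)) + a (-i) * m (-(i - 1))"
    "(b (-i) + a (-i))\<^sup>2 = a (-i) * (n (-(i + 1)) - n (-(i - 1)))"
    "(b (-i) + a (-i))\<^sup>2 = b (-i) * (m (-(i - 1)) - m (-(i + 1)))"
    unfolding shift by (simp_all add: algebra_simps)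
qed

lemma positive_ABMN_m_increments:
  assumes P: "positive_ABMN a b m n"
  shows "m (i + 1) - m i = 2 * a i + b i" "m i - m (i - 1) = (a i)\<^sup>2 / b i"
proof -
  have a: "0 < a i" and b: "0 < b i" using positive_ABMN_pos[OF P] by auto
  have eq1: "(a i + b i) * (m i + a i) = a i * m (i + 1) + b i * m (i - 1)"
    and eq3: "(a i + b i)^2 = b i * (m (i + 1) - m (i - 1))"
    using P unfolding positive_ABMN_def ABMN_def by blast+
  have "(a i + b i) * (m (i + 1) - m i) = (a i + b i) * (2 * a i + b i)"
    using eq1 eq3 by (simp add: algebra_simps power2_eq_square)
  then show fwd: "m (i + 1) - m i = 2 * a i + b i" using a b by simp
  have "b i * (m i - m (i - 1)) = (a i)\<^sup>2"
    using fwd eq3 by (simp add: algebra_simps power2_eq_square)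
  then show "m i - m (i - 1) = (a i)\<^sup>2 / b i" using b by (simp add: field_simps)
qed

lemma positive_ABMN_n_increments:
  assumes P: "positive_ABMN a b m n"
  shows "n (i - 1) - n i = a i + 2 * b i" "n i - n (i + 1) = (b i)\<^sup>2 / a i"
  using positive_ABMN_m_increments[OF positive_ABMN_reflect[OF P], of "-i"]
  by (simp_all add: ac_simps)

lemma positive_ABMN_strict:
  assumes P: "positive_ABMN a b m n"
  shows "strict_ABMN m n"
  unfolding strict_ABMN_def
proof
  fix i
  have a: "0 < a i" and b: "0 < b i" using positive_ABMN_pos[OF P] by auto
  then have "0 < (b i)\<^sup>2 / a i" by simp
  then show "m i < m (i + 1) \<and> n (i + 1) < n i"
    using positive_ABMN_m_increments(1)[OF P, of i] positive_ABMN_n_increments(2)[OF P, of i] a b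
    by linarith
qed

lemma positive_ABMN_ratio_growth:
  assumes P: "positive_ABMN a b m n"
  defines "t \<equiv> \<lambda>i. a i / b i"
  shows "t i + 2 * (t i)\<^sup>2 \<le> t (i + 1)"
proof -
  have a: "0 < a j" and b: "0 < b j" for j using positive_ABMN_pos[OF P] by auto
  have a_next: "a (i + 1) \<le> (b i)\<^sup>2 / a i"
    using positive_ABMN_n_increments[OF P, of "i + 1"] positive_ABMN_n_increments(2)[OF P, of i]
      b[of "i + 1"] by simp
  have "t (i + 1) = (2 * a i + b i) / a (i + 1)"
    using positive_ABMN_m_increments(1)[OF P, of i] positive_ABMN_m_increments(2)[OF P, of "i + 1"]
      a[of "i + 1"] b[of "i + 1"]
    unfolding t_def by (simp add: field_simps power2_eq_square)
  also have "\<dots> \<ge> (2 * a i + b i) / ((b i)\<^sup>2 / a i)"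
    using a_next a[of i] a[of "i + 1"] b[of i] by (intro divide_left_mono) simp_all
  also have "(2 * a i + b i) / ((b i)\<^sup>2 / a i) = t i + 2 * (t i)\<^sup>2"
    unfolding t_def using a[of i] b[of i] by (simp add: field_simps power2_eq_square)
  finally show ?thesis .
qed

lemma positive_ABMN_eventually_b_le_a:
  assumes P: "positive_ABMN a b m n"
  shows "\<forall>\<^sub>F i in at_top. b i \<le> a i"
proof -
  define t where "t i = a i / b i" for i
  have t_pos: "0 < t i" for i using positive_ABMN_pos[OF P] unfolding t_def by simp
  have growth: "t i + 2 * (t i)\<^sup>2 \<le> t (i + 1)" for i
    using positive_ABMN_ratio_growth[OF P] unfolding t_def by blast
  have "t i \<le> t (i + 1)" for i
    using growth[of i] zero_le_power2[of "t i"] by linarith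
  then have "t 0 \<le> t i" if "0 \<le> i" for i
    using int_step_mono[of 0 i t] that by blast
  then have square_ge: "(t 0)\<^sup>2 \<le> (t i)\<^sup>2" if "0 \<le> i" for i
    using that t_pos[of 0] by (intro power_mono) auto
  have "t i + 2 * (t 0)\<^sup>2 \<le> t (i + 1)" if "0 \<le> i" for i
    using square_ge[OF that] growth[of i] by linarith
  then have "\<forall>\<^sub>F i in at_top. 1 \<le> t i"
    using int_uniform_growth_eventually_ge[of t "2 * (t 0)\<^sup>2" 1] t_pos[of 0] by simp
  then show ?thesis
    by eventually_elim (use positive_ABMN_pos[OF P] in \<open>auto simp: t_def field_simps\<close>)
qed

lemma positive_ABMN_eventually_successor_le:
  assumes P: "positive_ABMN a b m n"
  shows "\<forall>\<^sub>F i in at_top. a (i + 1) + 2 * b (i + 1) \<le> b i"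
  using positive_ABMN_eventually_b_le_a[OF P]
proof eventually_elim
  case (elim i)
  have a: "0 < a i" and b: "0 < b i" using positive_ABMN_pos[OF P] by auto
  have "(b i)\<^sup>2 / a i \<le> b i"
    using elim a b by (simp add: field_simps power2_eq_square)
  then show ?case
    using positive_ABMN_n_increments[OF P, of "i + 1"] positive_ABMN_n_increments(2)[OF P, of i]
    by simp
qed

lemma positive_ABMN_bdd_above_m:
  assumes P: "positive_ABMN a b m n"
  shows "bdd_above (range m)"
proof -
  define \<Phi> where "\<Phi> i = m i + 2 * a i + 6 * b i" for i
  obtain N where small: "\<And>i. N \<le> i \<Longrightarrow> a (i + 1) + 2 * b (i + 1) \<le> b i"
    using positive_ABMN_eventually_successor_le[OF P] unfolding eventually_at_top_linorder by blast
  have "- \<Phi> i \<le> - \<Phi> (i + 1)" if "N \<le> i" for i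
    using positive_ABMN_m_increments(1)[OF P, of i] small[OF that]
      positive_ABMN_pos[OF P, of i] positive_ABMN_pos[OF P, of "i + 1"]
    unfolding \<Phi>_def by linarith
  then have \<Phi>_le: "\<Phi> i \<le> \<Phi> N" if "N \<le> i" for i
    using int_step_mono[of N i "\<lambda>j. - \<Phi> j"] that by simp
  have m_mono: "m i \<le> m j" if "i \<le> j" for i j
    using int_step_mono[of i j m] positive_ABMN_strict[OF P] that
    unfolding strict_ABMN_def by (auto intro: less_imp_le)
  have "m i \<le> max (m N) (\<Phi> N)" for i
  proof (cases "i \<le> N")
    case True
    then show ?thesis using m_mono[OF True] by simp
  next
    case False
    then have "m i \<le> \<Phi> i"
      using positive_ABMN_pos[OF P, of i] unfolding \<Phi>_def by simp
    then show ?thesis using False \<Phi>_le[of i] by simp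
  qed
  then show ?thesis by (intro bdd_aboveI) auto
qed

lemma positive_ABMN_bdd_below_n:
  assumes P: "positive_ABMN a b m n"
  shows "bdd_below (range n)"
proof -
  define \<Psi> where "\<Psi> i = n i - 2 * b i" for i
  obtain N where small: "\<And>i. N \<le> i \<Longrightarrow> a (i + 1) + 2 * b (i + 1) \<le> b i"
    using positive_ABMN_eventually_successor_le[OF P] unfolding eventually_at_top_linorder by blast
  have "\<Psi> i \<le> \<Psi> (i + 1)" if "N \<le> i" for i
  proof -
    have "(b i)\<^sup>2 / a i \<le> b i"
      using positive_ABMN_n_increments(1)[OF P, of "i + 1"] positive_ABMN_n_increments(2)[OF P, of i]
        small[OF that] positive_ABMN_pos[OF P, of "i + 1"] by simp
    then show ?thesis
      using positive_ABMN_n_increments(1)[OF P, of "i + 1", simplified]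
        positive_ABMN_n_increments(2)[OF P, of i] positive_ABMN_pos[OF P, of "i + 1"]
      unfolding \<Psi>_def by linarith
  qed
  then have \<Psi>_ge: "\<Psi> N \<le> \<Psi> i" if "N \<le> i" for i
    using int_step_mono[of N i \<Psi>] that by simp
  have n_antimono: "n j \<le> n i" if "i \<le> j" for i j
    using int_step_mono[of i j "\<lambda>k. - n k"] positive_ABMN_strict[OF P] that
    unfolding strict_ABMN_def by (auto intro: less_imp_le)
  have "min (n N) (\<Psi> N) \<le> n i" for i
  proof (cases "i \<le> N")
    case True
    then show ?thesis using n_antimono[OF True] by simp
  next
    case False
    then have "\<Psi> i \<le> n i"
      using positive_ABMN_pos[OF P, of i] unfolding \<Psi>_def by simp
    then show ?thesis using False \<Psi>_ge[of i] by simp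
  qed
  then show ?thesis by (intro bdd_belowI) auto
qed

lemma positive_ABMN_bounded:
  assumes P: "positive_ABMN a b m n"
  shows "bdd_above (range m)" "bdd_below (range m)" "bdd_above (range n)" "bdd_below (range n)"
proof -
  have reflect_range: "range (\<lambda>i. g (- i)) = range g" for g :: "int \<Rightarrow> real"
    by (metis image_image surj_def minus_minus)
  show "bdd_above (range m)" using positive_ABMN_bdd_above_m[OF P] .
  show "bdd_below (range n)" using positive_ABMN_bdd_below_n[OF P] .
  show "bdd_below (range m)" "bdd_above (range n)"
    using positive_ABMN_bdd_below_n[OF positive_ABMN_reflect[OF P]]
      positive_ABMN_bdd_above_m[OF positive_ABMN_reflect[OF P]]
    unfolding reflect_range .
qed

theorem mainTheorem1:
  fixes a b m n :: "int \<Rightarrow> real"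
  assumes "positive_ABMN a b m n"
  shows "strict_ABMN m n \<and>
    (\<exists>m_minf m_inf n_minf n_inf :: real.
       (m \<longlongrightarrow> m_minf) at_bot \<and> (m \<longlongrightarrow> m_inf) at_top \<and>
       (n \<longlongrightarrow> n_minf) at_bot \<and> (n \<longlongrightarrow> n_inf) at_top \<and>
       m_inf > m_minf \<and> n_minf > n_inf \<and>
       (n_minf - n_inf) / (m_inf - m_minf) > 0)"
proof -
  have strict: "strict_ABMN m n" using positive_ABMN_strict[OF assms] .
  note bounded = positive_ABMN_bounded[OF assms]
  obtain m_minf m_inf where m_lim: "(m \<longlongrightarrow> m_minf) at_bot" "(m \<longlongrightarrow> m_inf) at_top"
    and "m_minf < m_inf"
    using int_strict_step_bounded_limits[of m] strict bounded unfolding strict_ABMN_def by blast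
  have "bdd_above (range (\<lambda>i. - n i))" "bdd_below (range (\<lambda>i. - n i))"
    using bounded(3,4) by (simp_all add: image_image[symmetric] bdd_above_uminus bdd_below_uminus)
  then obtain l u where "((\<lambda>i. - n i) \<longlongrightarrow> l) at_bot" "((\<lambda>i. - n i) \<longlongrightarrow> u) at_top"
    and "l < u"
    using int_strict_step_bounded_limits[of "\<lambda>i. - n i"] strict unfolding strict_ABMN_def by auto
  then have "(n \<longlongrightarrow> - l) at_bot" "(n \<longlongrightarrow> - u) at_top" "- u < - l"
    using tendsto_minus by fastforce+
  moreover have "(- l - - u) / (m_inf - m_minf) > 0" using \<open>l < u\<close> \<open>m_minf < m_inf\<close> by simp
  ultimately show ?thesis using strict m_lim \<open>m_minf < m_inf\<close> by blast
qed

end
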